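(* Let $k$ be a field and $(\mathcal{C},\otimes_{\mathcal{C}},1_{\mathcal{C}})$ a small $k$-linear symmetric monoidal category. Let $M,N\in\mathrm{Psh}(\mathcal{C})$ and let $M_0\subset M$ be a sub-presheaf of vector spaces. Then there exists a sub-presheaf $M'\subset M$ with $M_0\subset M'$ such that the induced map $M'\otimes^{Day}N\to M\otimes^{Day}N$ is a monomorphism, and $\#(M')\le\max(\#(M_0),\#(\mathcal{C}),\aleph_0)$.
   Context: $\mathrm{Psh}(\mathcal{C})$ denotes the category of $k$-linear functors $\mathcal{C}^{op}\to \mathrm{Vect}_k$, with the Day convolution product $(F\otimes^{Day}G)(U)=\int^{X,Y}\mathcal{C}(U,X\otimes_{\mathcal{C}}Y)\otimes_k F(X)\otimes_k G(Y)$ (equivalently $\mathrm{colim}_{U\to X\otimes Y}F(X)\otimes G(Y)$). For a presheaf $F$, $\#(F)$ denotes the cardinality of $\coprod_{x\in\mathrm{Ob}\,\mathcal{C}}F(x)$, and $\#(\mathcal{C})$ the cardinality of the set of morphisms of $\mathcal{C}$. *)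

theory Defs
  imports Main
begin

text \<open>A small category with objects in 'o and morphisms in 'm, every hom-set
 Hom X Y a k-vector space, composition k-bilinear.  comp g f is g after f.\<close>

record ('o,'m,'k) lincat =
  Ob :: "'o set"
  Mor :: "'m set"
  dom :: "'m \<Rightarrow> 'o"
  cod :: "'m \<Rightarrow> 'o"
  cid :: "'o \<Rightarrow> 'm"
  comp :: "'m \<Rightarrow> 'm \<Rightarrow> 'm"
  hadd :: "'m \<Rightarrow> 'm \<Rightarrow> 'm"
  hscale :: "'k \<Rightarrow> 'm \<Rightarrow> 'm"
  hzero :: "'o \<Rightarrow> 'o \<Rightarrow> 'm"

definition Hom :: "('o,'m,'k,'z) lincat_scheme \<Rightarrow> 'o \<Rightarrow> 'o \<Rightarrow> 'm set" where
  "Hom C X Y = {f \<in> Mor C. dom C f = X \<and> cod C f = Y}"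

definition vs_on :: "'v set \<Rightarrow> ('v \<Rightarrow> 'v \<Rightarrow> 'v) \<Rightarrow> ('k::field \<Rightarrow> 'v \<Rightarrow> 'v) \<Rightarrow> 'v \<Rightarrow> bool" where
  "vs_on V add sc z \<longleftrightarrow>
     z \<in> V \<and>
     (\<forall>x\<in>V. \<forall>y\<in>V. add x y \<in> V) \<and>
     (\<forall>a. \<forall>x\<in>V. sc a x \<in> V) \<and>
     (\<forall>x\<in>V. \<forall>y\<in>V. \<forall>w\<in>V. add (add x y) w = add x (add y w)) \<and>
     (\<forall>x\<in>V. \<forall>y\<in>V. add x y = add y x) \<and>
     (\<forall>x\<in>V. add z x = x) \<and>
     (\<forall>x\<in>V. \<exists>y\<in>V. add x y = z) \<and>
     (\<forall>a. \<forall>x\<in>V. \<forall>y\<in>V. sc a (add x y) = add (sc a x) (sc a y)) \<and>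
     (\<forall>a b. \<forall>x\<in>V. sc (a + b) x = add (sc a x) (sc b x)) \<and>
     (\<forall>a b. \<forall>x\<in>V. sc (a * b) x = sc a (sc b x)) \<and>
     (\<forall>x\<in>V. sc 1 x = x)"

definition is_iso :: "('o,'m,'k,'z) lincat_scheme \<Rightarrow> 'o \<Rightarrow> 'o \<Rightarrow> 'm \<Rightarrow> bool" where
  "is_iso C X Y f \<longleftrightarrow> f \<in> Hom C X Y \<and>
     (\<exists>g\<in>Hom C Y X. comp C g f = cid C X \<and> comp C f g = cid C Y)"

definition klinear_category :: "('o,'m,'k::field,'z) lincat_scheme \<Rightarrow> bool" where
  "klinear_category C \<longleftrightarrow>
     (\<forall>f\<in>Mor C. dom C f \<in> Ob C \<and> cod C f \<in> Ob C) \<and>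
     (\<forall>X\<in>Ob C. cid C X \<in> Hom C X X) \<and>
     (\<forall>X\<in>Ob C. \<forall>Y\<in>Ob C. \<forall>Z\<in>Ob C. \<forall>f\<in>Hom C X Y. \<forall>g\<in>Hom C Y Z.
        comp C g f \<in> Hom C X Z) \<and>
     (\<forall>W\<in>Ob C. \<forall>X\<in>Ob C. \<forall>Y\<in>Ob C. \<forall>Z\<in>Ob C.
        \<forall>f\<in>Hom C W X. \<forall>g\<in>Hom C X Y. \<forall>h\<in>Hom C Y Z.
        comp C h (comp C g f) = comp C (comp C h g) f) \<and>
     (\<forall>X\<in>Ob C. \<forall>Y\<in>Ob C. \<forall>f\<in>Hom C X Y.
        comp C f (cid C X) = f \<and> comp C (cid C Y) f = f) \<and>
     (\<forall>X\<in>Ob C. \<forall>Y\<in>Ob C. vs_on (Hom C X Y) (hadd C) (hscale C) (hzero C X Y)) \<and>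
     (\<forall>X\<in>Ob C. \<forall>Y\<in>Ob C. \<forall>Z\<in>Ob C.
        \<forall>f\<in>Hom C X Y. \<forall>f'\<in>Hom C X Y. \<forall>g\<in>Hom C Y Z. \<forall>g'\<in>Hom C Y Z. \<forall>a.
        comp C (hadd C g g') f = hadd C (comp C g f) (comp C g' f) \<and>
        comp C g (hadd C f f') = hadd C (comp C g f) (comp C g f') \<and>
        comp C (hscale C a g) f = hscale C a (comp C g f) \<and>
        comp C g (hscale C a f) = hscale C a (comp C g f))"

record ('o,'m,'k) smcat = "('o,'m,'k) lincat" +
  tob :: "'o \<Rightarrow> 'o \<Rightarrow> 'o"
  tmor :: "'m \<Rightarrow> 'm \<Rightarrow> 'm"
  unit_ob :: "'o"
  assoc :: "'o \<Rightarrow> 'o \<Rightarrow> 'o \<Rightarrow> 'm"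
  lunit :: "'o \<Rightarrow> 'm"
  runit :: "'o \<Rightarrow> 'm"
  braid :: "'o \<Rightarrow> 'o \<Rightarrow> 'm"

definition klinear_symmetric_monoidal :: "('o,'m,'k::field) smcat \<Rightarrow> bool" where
  "klinear_symmetric_monoidal C \<longleftrightarrow>
   (let T = tob C; t = tmor C; I = unit_ob C; a = assoc C; l = lunit C;
        r = runit C; s = braid C; c = comp C; i = cid C in
     klinear_category C \<and>
     I \<in> Ob C \<and>
     (\<forall>X\<in>Ob C. \<forall>Y\<in>Ob C. T X Y \<in> Ob C) \<and>
     \<comment> \<open>tensor is a k-bilinear bifunctor\<close>
     (\<forall>X\<in>Ob C. \<forall>X'\<in>Ob C. \<forall>Y\<in>Ob C. \<forall>Y'\<in>Ob C. \<forall>f\<in>Hom C X X'. \<forall>g\<in>Hom C Y Y'.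
        t f g \<in> Hom C (T X Y) (T X' Y')) \<and>
     (\<forall>X\<in>Ob C. \<forall>Y\<in>Ob C. t (i X) (i Y) = i (T X Y)) \<and>
     (\<forall>X\<in>Ob C. \<forall>X'\<in>Ob C. \<forall>X''\<in>Ob C. \<forall>Y\<in>Ob C. \<forall>Y'\<in>Ob C. \<forall>Y''\<in>Ob C.
        \<forall>f\<in>Hom C X X'. \<forall>f'\<in>Hom C X' X''. \<forall>g\<in>Hom C Y Y'. \<forall>g'\<in>Hom C Y' Y''.
        t (c f' f) (c g' g) = c (t f' g') (t f g)) \<and>
     (\<forall>X\<in>Ob C. \<forall>X'\<in>Ob C. \<forall>Y\<in>Ob C. \<forall>Y'\<in>Ob C.
        \<forall>f\<in>Hom C X X'. \<forall>f'\<in>Hom C X X'. \<forall>g\<in>Hom C Y Y'. \<forall>g'\<in>Hom C Y Y'. \<forall>k.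
        t (hadd C f f') g = hadd C (t f g) (t f' g) \<and>
        t f (hadd C g g') = hadd C (t f g) (t f g') \<and>
        t (hscale C k f) g = hscale C k (t f g) \<and>
        t f (hscale C k g) = hscale C k (t f g)) \<and>
     \<comment> \<open>associator: natural isomorphism\<close>
     (\<forall>X\<in>Ob C. \<forall>Y\<in>Ob C. \<forall>Z\<in>Ob C. is_iso C (T (T X Y) Z) (T X (T Y Z)) (a X Y Z)) \<and>
     (\<forall>X\<in>Ob C. \<forall>X'\<in>Ob C. \<forall>Y\<in>Ob C. \<forall>Y'\<in>Ob C. \<forall>Z\<in>Ob C. \<forall>Z'\<in>Ob C.
        \<forall>f\<in>Hom C X X'. \<forall>g\<in>Hom C Y Y'. \<forall>h\<in>Hom C Z Z'.
        c (a X' Y' Z') (t (t f g) h) = c (t f (t g h)) (a X Y Z)) \<and>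
     \<comment> \<open>unitors: natural isomorphisms\<close>
     (\<forall>X\<in>Ob C. is_iso C (T I X) X (l X) \<and> is_iso C (T X I) X (r X)) \<and>
     (\<forall>X\<in>Ob C. \<forall>X'\<in>Ob C. \<forall>f\<in>Hom C X X'.
        c f (l X) = c (l X') (t (i I) f) \<and> c f (r X) = c (r X') (t f (i I))) \<and>
     \<comment> \<open>pentagon and triangle\<close>
     (\<forall>W\<in>Ob C. \<forall>X\<in>Ob C. \<forall>Y\<in>Ob C. \<forall>Z\<in>Ob C.
        c (t (i W) (a X Y Z)) (c (a W (T X Y) Z) (t (a W X Y) (i Z)))
          = c (a W X (T Y Z)) (a (T W X) Y Z)) \<and>
     (\<forall>X\<in>Ob C. \<forall>Y\<in>Ob C. c (t (i X) (l Y)) (a X I Y) = t (r X) (i Y)) \<and>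
     \<comment> \<open>symmetry: natural braiding, self-inverse, hexagon\<close>
     (\<forall>X\<in>Ob C. \<forall>Y\<in>Ob C. s X Y \<in> Hom C (T X Y) (T Y X) \<and> c (s Y X) (s X Y) = i (T X Y)) \<and>
     (\<forall>X\<in>Ob C. \<forall>X'\<in>Ob C. \<forall>Y\<in>Ob C. \<forall>Y'\<in>Ob C. \<forall>f\<in>Hom C X X'. \<forall>g\<in>Hom C Y Y'.
        c (s X' Y') (t f g) = c (t g f) (s X Y)) \<and>
     (\<forall>X\<in>Ob C. \<forall>Y\<in>Ob C. \<forall>Z\<in>Ob C.
        c (a Y Z X) (c (s X (T Y Z)) (a X Y Z))
          = c (t (i Y) (s X Z)) (c (a Y X Z) (t (s X Y) (i Z)))))"

text \<open>carr X is the vector space F(X); act f : F(Y) \<rightarrow> F(X) for f : X \<rightarrow> Y.\<close>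
record ('o,'m,'v,'k) psh =
  carr :: "'o \<Rightarrow> 'v set"
  padd :: "'o \<Rightarrow> 'v \<Rightarrow> 'v \<Rightarrow> 'v"
  pscale :: "'o \<Rightarrow> 'k \<Rightarrow> 'v \<Rightarrow> 'v"
  pzero :: "'o \<Rightarrow> 'v"
  act :: "'m \<Rightarrow> 'v \<Rightarrow> 'v"

definition presheaf :: "('o,'m,'k::field,'z) lincat_scheme \<Rightarrow> ('o,'m,'v,'k) psh \<Rightarrow> bool" where
  "presheaf C F \<longleftrightarrow>
     (\<forall>X\<in>Ob C. vs_on (carr F X) (padd F X) (pscale F X) (pzero F X)) \<and>
     (\<forall>X\<in>Ob C. \<forall>Y\<in>Ob C. \<forall>f\<in>Hom C X Y. \<forall>m\<in>carr F Y. \<forall>m'\<in>carr F Y. \<forall>k.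
        act F f m \<in> carr F X \<and>
        act F f (padd F Y m m') = padd F X (act F f m) (act F f m') \<and>
        act F f (pscale F Y k m) = pscale F X k (act F f m)) \<and>
     (\<forall>X\<in>Ob C. \<forall>m\<in>carr F X. act F (cid C X) m = m) \<and>
     (\<forall>X\<in>Ob C. \<forall>Y\<in>Ob C. \<forall>Z\<in>Ob C. \<forall>f\<in>Hom C X Y. \<forall>g\<in>Hom C Y Z. \<forall>m\<in>carr F Z.
        act F (comp C g f) m = act F f (act F g m)) \<and>
     (\<forall>X\<in>Ob C. \<forall>Y\<in>Ob C. \<forall>f\<in>Hom C X Y. \<forall>f'\<in>Hom C X Y. \<forall>m\<in>carr F Y. \<forall>k.
        act F (hadd C f f') m = padd F X (act F f m) (act F f' m) \<and>
        act F (hscale C k f) m = pscale F X k (act F f m))"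

text \<open>A sub-presheaf of vector spaces of F, given by its family of carriers
  (with the operations inherited from F).\<close>
definition sub_presheaf :: "('o,'m,'k::field,'z) lincat_scheme \<Rightarrow> ('o,'m,'v,'k) psh \<Rightarrow> ('o \<Rightarrow> 'v set) \<Rightarrow> bool" where
  "sub_presheaf C F S \<longleftrightarrow>
     (\<forall>X\<in>Ob C. S X \<subseteq> carr F X \<and> pzero F X \<in> S X \<and>
        (\<forall>m\<in>S X. \<forall>m'\<in>S X. padd F X m m' \<in> S X) \<and>
        (\<forall>k. \<forall>m\<in>S X. pscale F X k m \<in> S X)) \<and>
     (\<forall>X\<in>Ob C. \<forall>Y\<in>Ob C. \<forall>f\<in>Hom C X Y. \<forall>m\<in>S Y. act F f m \<in> S X)"

text \<open>(S \<otimes>Day N)(U) = colim over U \<rightarrow> X\<otimes>Y of S(X) \<otimes>k N(Y), realised as the free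
 k-vector space on generators (X,Y,f,m,n) with f : U \<rightarrow> X\<otimes>Y, m \<in> S(X), n \<in> N(Y),
 modulo the k-trilinearity relations and the coend (dinaturality) relations.\<close>

type_synonym ('o,'m,'v,'w) dgen = "'o \<times> 'o \<times> 'm \<times> 'v \<times> 'w"

definition delta :: "'g \<Rightarrow> 'g \<Rightarrow> 'k::field" where
  "delta g = (\<lambda>h. if h = g then 1 else 0)"

definition day_gen :: "('o,'m,'k::field) smcat \<Rightarrow> ('o \<Rightarrow> 'v set) \<Rightarrow> ('o,'m,'w,'k) psh
     \<Rightarrow> 'o \<Rightarrow> ('o,'m,'v,'w) dgen \<Rightarrow> bool" where
  "day_gen C S N U g \<longleftrightarrow> (case g of (X,Y,f,m,n) \<Rightarrow>
     X \<in> Ob C \<and> Y \<in> Ob C \<and> f \<in> Hom C U (tob C X Y) \<and> m \<in> S X \<and> n \<in> carr N Y)"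

definition day_free :: "('o,'m,'k::field) smcat \<Rightarrow> ('o \<Rightarrow> 'v set) \<Rightarrow> ('o,'m,'w,'k) psh
     \<Rightarrow> 'o \<Rightarrow> (('o,'m,'v,'w) dgen \<Rightarrow> 'k) set" where
  "day_free C S N U = {c. finite {g. c g \<noteq> 0} \<and> (\<forall>g. c g \<noteq> 0 \<longrightarrow> day_gen C S N U g)}"

definition day_rels :: "('o,'m,'k::field) smcat \<Rightarrow> ('o,'m,'v,'k) psh \<Rightarrow> ('o \<Rightarrow> 'v set)
     \<Rightarrow> ('o,'m,'w,'k) psh \<Rightarrow> 'o \<Rightarrow> (('o,'m,'v,'w) dgen \<Rightarrow> 'k) set" where
  "day_rels C M S N U =
     \<comment> \<open>linearity in f\<close>
     {(\<lambda>h. delta (X,Y,hadd C f f',m,n) h - delta (X,Y,f,m,n) h - delta (X,Y,f',m,n) h)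
        | X Y f f' m n. day_gen C S N U (X,Y,f,m,n) \<and> f' \<in> Hom C U (tob C X Y)} \<union>
     {(\<lambda>h. delta (X,Y,hscale C a f,m,n) h - a * delta (X,Y,f,m,n) h)
        | X Y f m n a. day_gen C S N U (X,Y,f,m,n)} \<union>
     \<comment> \<open>linearity in m\<close>
     {(\<lambda>h. delta (X,Y,f,padd M X m m',n) h - delta (X,Y,f,m,n) h - delta (X,Y,f,m',n) h)
        | X Y f m m' n. day_gen C S N U (X,Y,f,m,n) \<and> m' \<in> S X} \<union>
     {(\<lambda>h. delta (X,Y,f,pscale M X a m,n) h - a * delta (X,Y,f,m,n) h)
        | X Y f m n a. day_gen C S N U (X,Y,f,m,n)} \<union>
     \<comment> \<open>linearity in n\<close>
     {(\<lambda>h. delta (X,Y,f,m,padd N Y n n') h - delta (X,Y,f,m,n) h - delta (X,Y,f,m,n') h)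
        | X Y f m n n'. day_gen C S N U (X,Y,f,m,n) \<and> n' \<in> carr N Y} \<union>
     {(\<lambda>h. delta (X,Y,f,m,pscale N Y a n) h - a * delta (X,Y,f,m,n) h)
        | X Y f m n a. day_gen C S N U (X,Y,f,m,n)} \<union>
     \<comment> \<open>coend relations: ((a\<otimes>b)\<circ>f, m', n') ~ (f, M(a) m', N(b) n')\<close>
     {(\<lambda>h. delta (X',Y',comp C (tmor C a b) f,m',n') h - delta (X,Y,f,act M a m',act N b n') h)
        | X Y X' Y' a b f m' n'. X \<in> Ob C \<and> Y \<in> Ob C \<and> X' \<in> Ob C \<and> Y' \<in> Ob C \<and>
          a \<in> Hom C X X' \<and> b \<in> Hom C Y Y' \<and> f \<in> Hom C U (tob C X Y) \<and>
          m' \<in> S X' \<and> n' \<in> carr N Y'}"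

inductive_set day_span :: "('o,'m,'k::field) smcat \<Rightarrow> ('o,'m,'v,'k) psh \<Rightarrow> ('o \<Rightarrow> 'v set)
     \<Rightarrow> ('o,'m,'w,'k) psh \<Rightarrow> 'o \<Rightarrow> (('o,'m,'v,'w) dgen \<Rightarrow> 'k) set"
  for C M S N U where
  zero: "(\<lambda>_. 0) \<in> day_span C M S N U"
| rel: "r \<in> day_rels C M S N U \<Longrightarrow> r \<in> day_span C M S N U"
| add: "x \<in> day_span C M S N U \<Longrightarrow> y \<in> day_span C M S N U \<Longrightarrow> (\<lambda>g. x g + y g) \<in> day_span C M S N U"
| scale: "x \<in> day_span C M S N U \<Longrightarrow> (\<lambda>g. a * x g) \<in> day_span C M S N U"

text \<open>The induced map (S\<otimes>Day N)(U) \<rightarrow> (M\<otimes>Day N)(U), [c] \<mapsto> [c], is injective iff every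
 formal combination over S-generators lying in the relation space for M already lies
 in the relation space for S.  A morphism of presheaves of vector spaces is a
 monomorphism iff it is injective in every component.\<close>
definition day_incl_mono :: "('o,'m,'k::field) smcat \<Rightarrow> ('o,'m,'v,'k) psh \<Rightarrow> ('o \<Rightarrow> 'v set)
     \<Rightarrow> ('o,'m,'w,'k) psh \<Rightarrow> bool" where
  "day_incl_mono C M S N \<longleftrightarrow>
     (\<forall>U\<in>Ob C. \<forall>c\<in>day_free C S N U.
        c \<in> day_span C M (carr M) N U \<longrightarrow> c \<in> day_span C M S N U)"

text \<open>#(S) = cardinality of the disjoint union of the S(X).\<close>
definition psh_size :: "('o,'m,'k,'z) lincat_scheme \<Rightarrow> ('o \<Rightarrow> 'v set) \<Rightarrow> ('o \<times> 'v) set" where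
  "psh_size C S = (SIGMA X:Ob C. S X)"

end

theory Submission
  imports Defs
begin

text \<open>
  The sub-presheaf M' is a Skolem hull of M0 in M: starting from M0 one adjoins, countably often,
  one solution in M of every solvable finite system of equations m + m' = m'' and M(f) m = m'
  (f a morphism of C) whose parameters have already been constructed.  There are at most
  max(#M0, #C, \<aleph>0) such systems, and M' is a sub-presheaf because sums, restrictions and
  scalar multiples (restrictions along a \<cdot> id) are the unique solutions of such systems.

  The hull is pure in M: a finite system with parameters in M' that is solvable in M has a
  solution in M' fixing the parameters.  If a combination of generators of M' \<otimes> N vanishes
  in M \<otimes> N, the finitely many defining relations witnessing this involve finitely many elements
  of M and finitely many such equations among them.  Moving these elements to a solution in M'
  fixes the combination and turns every relation into a defining relation of M' \<otimes> N.
\<close>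

section \<open>Finitely supported functions\<close>

definition finite_support :: "('g \<Rightarrow> 'k::zero) \<Rightarrow> bool" where
  "finite_support c \<longleftrightarrow> finite {g. c g \<noteq> 0}"

definition pushforward :: "('g \<Rightarrow> 'h) \<Rightarrow> ('g \<Rightarrow> 'k::comm_monoid_add) \<Rightarrow> 'h \<Rightarrow> 'k" where
  "pushforward \<phi> c h = sum c {g. c g \<noteq> 0 \<and> \<phi> g = h}"

lemma pushforward_eq_sum:
  assumes "finite T" "{g. c g \<noteq> 0} \<subseteq> T"
  shows "pushforward \<phi> c h = sum c {g\<in>T. \<phi> g = h}"
  unfolding pushforward_def by (rule sum.mono_neutral_left) (use assms in auto)

lemma finite_support_add: "finite_support c \<Longrightarrow> finite_support d \<Longrightarrow> finite_support (\<lambda>g. c g + d g)"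
  for c d :: "_ \<Rightarrow> 'k::monoid_add"
  unfolding finite_support_def
  by (rule finite_subset[of _ "{g. c g \<noteq> 0} \<union> {g. d g \<noteq> 0}"]) auto

lemma finite_support_diff: "finite_support c \<Longrightarrow> finite_support d \<Longrightarrow> finite_support (\<lambda>g. c g - d g)"
  for c d :: "_ \<Rightarrow> 'k::ab_group_add"
  unfolding finite_support_def
  by (rule finite_subset[of _ "{g. c g \<noteq> 0} \<union> {g. d g \<noteq> 0}"]) auto

lemma finite_support_scale: "finite_support c \<Longrightarrow> finite_support (\<lambda>g. a * c g)"
  for c :: "_ \<Rightarrow> 'k::mult_zero"
  unfolding finite_support_def by (rule finite_subset[of _ "{g. c g \<noteq> 0}"]) auto

lemma finite_support_delta: "finite_support (delta g)"
  unfolding finite_support_def delta_def by (rule finite_subset[of _ "{g}"]) auto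

lemma pushforward_add:
  assumes "finite_support c" "finite_support d"
  shows "pushforward \<phi> (\<lambda>g. c g + d g) = (\<lambda>h. pushforward \<phi> c h + pushforward \<phi> d h)"
proof
  fix h
  let ?T = "{g. c g \<noteq> 0} \<union> {g. d g \<noteq> 0}"
  have T: "finite ?T" using assms by (auto simp: finite_support_def)
  have "pushforward \<phi> (\<lambda>g. c g + d g) h = (\<Sum>g\<in>{g\<in>?T. \<phi> g = h}. c g + d g)"
    by (rule pushforward_eq_sum) (use T in auto)
  then show "pushforward \<phi> (\<lambda>g. c g + d g) h = pushforward \<phi> c h + pushforward \<phi> d h"
    by (simp add: sum.distrib pushforward_eq_sum[OF T])
qed

lemma pushforward_diff:
  fixes c d :: "_ \<Rightarrow> 'k::ab_group_add"
  assumes "finite_support c" "finite_support d"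
  shows "pushforward \<phi> (\<lambda>g. c g - d g) = (\<lambda>h. pushforward \<phi> c h - pushforward \<phi> d h)"
proof
  fix h
  let ?T = "{g. c g \<noteq> 0} \<union> {g. d g \<noteq> 0}"
  have T: "finite ?T" using assms by (auto simp: finite_support_def)
  have "pushforward \<phi> (\<lambda>g. c g - d g) h = (\<Sum>g\<in>{g\<in>?T. \<phi> g = h}. c g - d g)"
    by (rule pushforward_eq_sum) (use T in auto)
  then show "pushforward \<phi> (\<lambda>g. c g - d g) h = pushforward \<phi> c h - pushforward \<phi> d h"
    by (simp add: sum_subtractf pushforward_eq_sum[OF T])
qed

lemma pushforward_scale:
  fixes c :: "_ \<Rightarrow> 'k::semiring_0"
  assumes "finite_support c"
  shows "pushforward \<phi> (\<lambda>g. a * c g) = (\<lambda>h. a * pushforward \<phi> c h)"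
proof
  fix h
  let ?T = "{g. c g \<noteq> 0}"
  have T: "finite ?T" using assms by (simp add: finite_support_def)
  have "pushforward \<phi> (\<lambda>g. a * c g) h = (\<Sum>g\<in>{g\<in>?T. \<phi> g = h}. a * c g)"
    by (rule pushforward_eq_sum) (use T in auto)
  then show "pushforward \<phi> (\<lambda>g. a * c g) h = a * pushforward \<phi> c h"
    by (simp add: sum_distrib_left pushforward_eq_sum[OF T])
qed

lemma pushforward_zero: "pushforward \<phi> (\<lambda>_. 0) = (\<lambda>_. 0)"
  by (simp add: pushforward_def fun_eq_iff)

lemma pushforward_delta: "pushforward \<phi> (delta g) = delta (\<phi> g)"
proof
  fix h
  have "{x\<in>{g}. \<phi> x = h} = (if \<phi> g = h then {g} else {})" by auto
  then show "pushforward \<phi> (delta g) h = delta (\<phi> g) h"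
    by (simp add: pushforward_eq_sum[of "{g}"] delta_def)
qed

lemma pushforward_id_on_support:
  assumes "\<And>g. c g \<noteq> 0 \<Longrightarrow> \<phi> g = g"
  shows "pushforward \<phi> c = c"
proof
  fix h
  have "{g. c g \<noteq> 0 \<and> \<phi> g = h} = (if c h = 0 then {} else {h})" using assms by auto
  then show "pushforward \<phi> c h = c h" by (simp add: pushforward_def)
qed

lemma cid_in_Hom: "klinear_category C \<Longrightarrow> X \<in> Ob C \<Longrightarrow> cid C X \<in> Hom C X X"
  by (simp add: klinear_category_def)

lemma hscale_cid_in_Hom: "klinear_category C \<Longrightarrow> X \<in> Ob C \<Longrightarrow> hscale C a (cid C X) \<in> Hom C X X"
  using cid_in_Hom[of C X] by (simp add: klinear_category_def vs_on_def)

lemma presheaf_vs_on: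
  "presheaf C M \<Longrightarrow> X \<in> Ob C \<Longrightarrow> vs_on (carr M X) (padd M X) (pscale M X) (pzero M X)"
  by (simp add: presheaf_def)

lemma presheaf_padd_closed:
  "presheaf C M \<Longrightarrow> X \<in> Ob C \<Longrightarrow> m \<in> carr M X \<Longrightarrow> m' \<in> carr M X \<Longrightarrow> padd M X m m' \<in> carr M X"
  using presheaf_vs_on[of C M X] by (simp add: vs_on_def)

lemma presheaf_pscale_closed:
  "presheaf C M \<Longrightarrow> X \<in> Ob C \<Longrightarrow> m \<in> carr M X \<Longrightarrow> pscale M X a m \<in> carr M X"
  using presheaf_vs_on[of C M X] by (simp add: vs_on_def)

lemma presheaf_act_closed:
  "presheaf C M \<Longrightarrow> X \<in> Ob C \<Longrightarrow> Y \<in> Ob C \<Longrightarrow> f \<in> Hom C X Y \<Longrightarrow> m \<in> carr M Y \<Longrightarrow>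
   act M f m \<in> carr M X"
  unfolding presheaf_def by blast

lemma act_hscale_cid:
  assumes C: "klinear_category C" and M: "presheaf C M" and X: "X \<in> Ob C" and m: "m \<in> carr M X"
  shows "act M (hscale C a (cid C X)) m = pscale M X a m"
proof -
  have "act M (hscale C a (cid C X)) m = pscale M X a (act M (cid C X) m)"
    using M X cid_in_Hom[OF C X] m unfolding presheaf_def by blast
  also have "act M (cid C X) m = m" using M X m unfolding presheaf_def by blast
  finally show ?thesis .
qed

section \<open>Equations in a presheaf\<close>

datatype ('m,'x) equation = EqAdd 'x 'x 'x | EqAct 'm 'x 'x

fun holds :: "('o,'m,'k,'z) lincat_scheme \<Rightarrow> ('o,'m,'v,'k) psh \<Rightarrow> ('x \<Rightarrow> 'o) \<Rightarrow> ('x \<Rightarrow> 'v)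
    \<Rightarrow> ('m,'x) equation \<Rightarrow> bool" where
  "holds C M ob val (EqAdd x y z) \<longleftrightarrow>
     ob y = ob x \<and> ob z = ob x \<and> padd M (ob x) (val x) (val y) = val z"
| "holds C M ob val (EqAct f x y) \<longleftrightarrow> f \<in> Hom C (ob y) (ob x) \<and> act M f (val x) = val y"

lemma holds_cong:
  "(\<And>x. x \<in> set2_equation e \<Longrightarrow> ob x = ob' x \<and> val x = val' x) \<Longrightarrow>
   holds C M ob val e = holds C M ob' val' e"
  by (cases e) simp_all

lemma holds_map_equation:
  "holds C M ob val (map_equation id g e) = holds C M (ob \<circ> g) (val \<circ> g) e"
  by (cases e) simp_all

definition solution_in :: "('o,'m,'k,'z) lincat_scheme \<Rightarrow> ('o,'m,'v,'k) psh \<Rightarrow> ('o \<Rightarrow> 'v set)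
    \<Rightarrow> ('o \<times> 'v) set \<Rightarrow> ('m, 'o \<times> 'v) equation set \<Rightarrow> ('o \<Rightarrow> 'v \<Rightarrow> 'v) \<Rightarrow> bool" where
  "solution_in C M S E Q \<sigma> \<longleftrightarrow>
     (\<forall>(X,m)\<in>E. \<sigma> X m \<in> S X) \<and> (\<forall>e\<in>Q. holds C M fst (\<lambda>(X,m). \<sigma> X m) e)"

definition finite_system :: "('o,'m,'k,'z) lincat_scheme \<Rightarrow> ('o \<times> 'v) set \<Rightarrow> ('m, 'o \<times> 'v) equation set
    \<Rightarrow> bool" where
  "finite_system C E Q \<longleftrightarrow> finite E \<and> finite Q \<and> fst ` E \<subseteq> Ob C \<and> (\<forall>e\<in>Q. set2_equation e \<subseteq> E)"

lemma solution_in_Un: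
  "solution_in C M S (E \<union> E') (Q \<union> Q') \<sigma> \<longleftrightarrow> solution_in C M S E Q \<sigma> \<and> solution_in C M S E' Q' \<sigma>"
  unfolding solution_in_def by blast

lemma finite_system_Un:
  "finite_system C E Q \<Longrightarrow> finite_system C E' Q' \<Longrightarrow> finite_system C (E \<union> E') (Q \<union> Q')"
  unfolding finite_system_def by blast

section \<open>The Skolem hull\<close>

text \<open>A system of equations in the unknowns 0, 1, \<dots>, the i-th of which ranges over M(objs ! i);
  in solution a partial assignment params pins some of the unknowns.\<close>

definition solves :: "('o,'m,'k,'z) lincat_scheme \<Rightarrow> ('o,'m,'v,'k) psh \<Rightarrow> 'o list
    \<Rightarrow> ('m, nat) equation list \<Rightarrow> 'v list \<Rightarrow> bool" where
  "solves C M objs eqs vs \<longleftrightarrow>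
     list_all2 (\<lambda>X v. X \<in> Ob C \<and> v \<in> carr M X) objs vs \<and>
     (\<forall>e\<in>set eqs. holds C M ((!) objs) ((!) vs) e)"

definition instantiates :: "'v option list \<Rightarrow> 'v list \<Rightarrow> bool" where
  "instantiates params vs \<longleftrightarrow> list_all2 (\<lambda>p v. p = None \<or> p = Some v) params vs"

definition solution :: "('o,'m,'k,'z) lincat_scheme \<Rightarrow> ('o,'m,'v,'k) psh \<Rightarrow> 'o list
    \<Rightarrow> 'v option list \<Rightarrow> ('m, nat) equation list \<Rightarrow> 'v list" where
  "solution C M objs params eqs =
     (SOME vs. solves C M objs eqs vs \<and> instantiates params vs)"

lemma solution_solves:
  assumes "solves C M objs eqs vs" "instantiates params vs"
  shows "solves C M objs eqs (solution C M objs params eqs)"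
    and "instantiates params (solution C M objs params eqs)"
  using someI[of "\<lambda>vs. solves C M objs eqs vs \<and> instantiates params vs" vs] assms
  by (simp_all add: solution_def)

definition skolem_step :: "('o,'m,'k,'z) lincat_scheme \<Rightarrow> ('o,'m,'v,'k) psh \<Rightarrow> ('o \<Rightarrow> 'v set)
    \<Rightarrow> 'o \<Rightarrow> 'v set" where
  "skolem_step C M A X = A X \<union>
     {solution C M objs params eqs ! i | objs params eqs i.
        objs \<in> lists (Ob C) \<and> params \<in> lists (insert None (Some ` (\<Union>Y\<in>Ob C. A Y))) \<and>
        eqs \<in> lists {e. set1_equation e \<subseteq> Mor C} \<and>
        (\<exists>vs. solves C M objs eqs vs \<and> instantiates params vs) \<and>
        i < length objs \<and> objs ! i = X}"

primrec skolem_chain :: "('o,'m,'k,'z) lincat_scheme \<Rightarrow> ('o,'m,'v,'k) psh \<Rightarrow> ('o \<Rightarrow> 'v set)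
    \<Rightarrow> nat \<Rightarrow> 'o \<Rightarrow> 'v set" where
  "skolem_chain C M A 0 = A"
| "skolem_chain C M A (Suc n) = skolem_step C M (skolem_chain C M A n)"

definition skolem_hull :: "('o,'m,'k,'z) lincat_scheme \<Rightarrow> ('o,'m,'v,'k) psh \<Rightarrow> ('o \<Rightarrow> 'v set)
    \<Rightarrow> 'o \<Rightarrow> 'v set" where
  "skolem_hull C M A X = (\<Union>n. skolem_chain C M A n X)"

lemma skolem_chain_mono: "n \<le> n' \<Longrightarrow> skolem_chain C M A n X \<subseteq> skolem_chain C M A n' X"
  by (rule lift_Suc_mono_le[of "\<lambda>n. skolem_chain C M A n X"]) (auto simp: skolem_step_def)

lemma skolem_chain_subset_hull: "skolem_chain C M A n X \<subseteq> skolem_hull C M A X"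
  unfolding skolem_hull_def by blast

lemma skolem_chain_subset_carr:
  assumes "\<forall>X\<in>Ob C. A X \<subseteq> carr M X" "X \<in> Ob C"
  shows "skolem_chain C M A n X \<subseteq> carr M X"
  using assms(2)
proof (induction n arbitrary: X)
  case 0
  then show ?case using assms(1) by simp
next
  case (Suc n)
  show ?case
  proof
    fix v assume "v \<in> skolem_chain C M A (Suc n) X"
    then consider "v \<in> skolem_chain C M A n X"
      | objs params eqs i where "solves C M objs eqs (solution C M objs params eqs)"
        "i < length objs" "objs ! i = X" "v = solution C M objs params eqs ! i"
      unfolding skolem_chain.simps skolem_step_def using solution_solves(1) by blast
    then show "v \<in> carr M X"
      by cases (use Suc in \<open>auto simp: solves_def list_all2_conv_all_nth\<close>)
  qed
qed

lemma skolem_hull_subset_carr: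
  "\<forall>X\<in>Ob C. A X \<subseteq> carr M X \<Longrightarrow> X \<in> Ob C \<Longrightarrow> skolem_hull C M A X \<subseteq> carr M X"
  using skolem_chain_subset_carr[of C A M X] unfolding skolem_hull_def by (simp add: UN_subset_iff)

lemma holds_set1_subset_Mor: "holds C M ob val e \<Longrightarrow> set1_equation e \<subseteq> Mor C"
  by (cases e) (auto simp: Hom_def)

lemma skolem_hull_solves:
  assumes vs: "solves C M objs eqs vs"
  obtains vs' where "solves C M objs eqs vs'"
    "\<And>i. i < length objs \<Longrightarrow> vs' ! i \<in> skolem_hull C M A (objs ! i)"
    "\<And>i. i < length objs \<Longrightarrow> vs ! i \<in> skolem_hull C M A (objs ! i) \<Longrightarrow> vs' ! i = vs ! i"
proof -
  define J where "J = {i. i < length objs \<and> vs ! i \<in> skolem_hull C M A (objs ! i)}"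
  have "\<forall>i\<in>J. \<exists>n. vs ! i \<in> skolem_chain C M A n (objs ! i)"
    by (auto simp: J_def skolem_hull_def)
  then obtain n where n: "\<And>i. i \<in> J \<Longrightarrow> vs ! i \<in> skolem_chain C M A (n i) (objs ! i)"
    by metis
  define N where "N = Max (n ` J)"
  have J_chain: "vs ! i \<in> skolem_chain C M A N (objs ! i)" if "i \<in> J" for i
  proof -
    have "n i \<le> N" using that by (simp add: N_def J_def)
    then have "skolem_chain C M A (n i) (objs ! i) \<subseteq> skolem_chain C M A N (objs ! i)"
      by (rule skolem_chain_mono)
    with n[OF that] show ?thesis by blast
  qed
  have len: "length vs = length objs" and objs: "\<And>i. i < length objs \<Longrightarrow> objs ! i \<in> Ob C"
    using vs by (auto simp: solves_def list_all2_conv_all_nth)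
  define params where "params = map (\<lambda>i. if i \<in> J then Some (vs ! i) else None) [0..<length objs]"
  have fits: "instantiates params vs"
    using len by (simp add: instantiates_def params_def list_all2_conv_all_nth)
  have "objs \<in> lists (Ob C)"
    using objs by (auto simp: in_set_conv_nth)
  moreover have "params \<in> lists (insert None (Some ` (\<Union>Y\<in>Ob C. skolem_chain C M A N Y)))"
    using J_chain objs by (fastforce simp: params_def J_def)
  moreover have "eqs \<in> lists {e. set1_equation e \<subseteq> Mor C}"
    using vs holds_set1_subset_Mor by (fastforce simp: solves_def)
  ultimately have new: "solution C M objs params eqs ! i \<in> skolem_chain C M A (Suc N) (objs ! i)"
    if "i < length objs" for i
    using that vs fits unfolding skolem_chain.simps skolem_step_def by blast
  show thesis
  proof
    show "solves C M objs eqs (solution C M objs params eqs)"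
      by (rule solution_solves(1)[OF vs fits])
    show "solution C M objs params eqs ! i \<in> skolem_hull C M A (objs ! i)" if "i < length objs" for i
      using skolem_chain_subset_hull new[OF that] by (rule subsetD)
    show "solution C M objs params eqs ! i = vs ! i"
      if "i < length objs" "vs ! i \<in> skolem_hull C M A (objs ! i)" for i
      using solution_solves(2)[OF vs fits] that
      by (auto simp: instantiates_def params_def J_def list_all2_conv_all_nth)
  qed
qed

lemma skolem_hull_pure:
  assumes sys: "finite_system C E Q" and id: "solution_in C M (carr M) E Q (\<lambda>X m. m)"
  obtains \<sigma> where "solution_in C M (skolem_hull C M A) E Q \<sigma>"
    "\<And>X m. m \<in> skolem_hull C M A X \<Longrightarrow> \<sigma> X m = m"
proof -
  have "finite E" "finite Q" using sys by (simp_all add: finite_system_def)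
  then obtain es eqs where es: "set es = E" and eqs: "set eqs = Q" by (meson finite_list)
  define idx where "idx x = (SOME i. i < length es \<and> es ! i = x)" for x
  have idx: "idx x < length es \<and> es ! idx x = x" if "x \<in> E" for x
    unfolding idx_def by (rule someI_ex) (use that es in \<open>auto simp: in_set_conv_nth\<close>)
  define objs where "objs = map fst es"
  have objs_idx: "objs ! idx x = fst x" if "x \<in> E" for x
    using idx[OF that] by (simp add: objs_def)
  have vars: "x \<in> E" if "e \<in> Q" "x \<in> set2_equation e" for e x
    using sys that by (auto simp: finite_system_def)
  have renamed: "holds C M ((!) objs) ((!) vs) (map_equation id idx e) \<longleftrightarrow> holds C M fst val e"
    if "e \<in> Q" "\<And>x. x \<in> E \<Longrightarrow> vs ! idx x = val x" for vs val e
    unfolding holds_map_equation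
    by (rule holds_cong) (use that objs_idx vars in \<open>simp add: comp_def\<close>)
  have "solves C M objs (map (map_equation id idx) eqs) (map snd es)"
    unfolding solves_def
  proof
    show "list_all2 (\<lambda>X v. X \<in> Ob C \<and> v \<in> carr M X) objs (map snd es)"
      using sys id es by (fastforce simp: objs_def list_all2_conv_all_nth finite_system_def solution_in_def)
    have "holds C M fst snd e" if "e \<in> Q" for e
      using id that by (simp add: solution_in_def case_prod_beta')
    then show "\<forall>e\<in>set (map (map_equation id idx) eqs). holds C M ((!) objs) ((!) (map snd es)) e"
      using renamed idx eqs by auto
  qed
  then obtain vs' where vs': "solves C M objs (map (map_equation id idx) eqs) vs'"
    and in_hull: "\<And>i. i < length objs \<Longrightarrow> vs' ! i \<in> skolem_hull C M A (objs ! i)"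
    and fixed: "\<And>i. i < length objs \<Longrightarrow> map snd es ! i \<in> skolem_hull C M A (objs ! i) \<Longrightarrow>
      vs' ! i = map snd es ! i"
    by (rule skolem_hull_solves[where A = A]) auto
  define \<sigma> where "\<sigma> X m = (if (X,m) \<in> E then vs' ! idx (X,m) else m)" for X m
  show thesis
  proof
    show "solution_in C M (skolem_hull C M A) E Q \<sigma>"
      unfolding solution_in_def
    proof (intro conjI ballI)
      fix x assume "x \<in> E"
      then show "case x of (X,m) \<Rightarrow> \<sigma> X m \<in> skolem_hull C M A X"
        using in_hull[of "idx x"] idx objs_idx by (auto simp: \<sigma>_def objs_def)
    next
      fix e assume "e \<in> Q"
      moreover have "holds C M ((!) objs) ((!) vs') (map_equation id idx e)"
        using vs' eqs \<open>e \<in> Q\<close> by (auto simp: solves_def)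
      moreover have "vs' ! idx x = (case x of (X,m) \<Rightarrow> \<sigma> X m)" if "x \<in> E" for x
        using that by (cases x) (simp add: \<sigma>_def)
      ultimately show "holds C M fst (\<lambda>(X,m). \<sigma> X m) e"
        using renamed by blast
    qed
    show "\<sigma> X m = m" if "m \<in> skolem_hull C M A X" for X m
      using that fixed[of "idx (X,m)"] idx[of "(X,m)"] objs_idx[of "(X,m)"]
      by (auto simp: \<sigma>_def objs_def)
  qed
qed

lemma skolem_hull_padd_closed:
  assumes M: "presheaf C M" and A: "\<forall>X\<in>Ob C. A X \<subseteq> carr M X" and X: "X \<in> Ob C"
    and m: "m \<in> skolem_hull C M A X" and m': "m' \<in> skolem_hull C M A X"
  shows "padd M X m m' \<in> skolem_hull C M A X"
proof -
  let ?p = "padd M X m m'"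
  let ?E = "{(X,m), (X,m'), (X,?p)}" and ?Q = "{EqAdd (X,m) (X,m') (X,?p)}"
  have carr: "m \<in> carr M X" "m' \<in> carr M X" using skolem_hull_subset_carr[OF A X] m m' by auto
  have "finite_system C ?E ?Q" using X by (simp add: finite_system_def)
  moreover have "solution_in C M (carr M) ?E ?Q (\<lambda>X m. m)"
    using carr presheaf_padd_closed[OF M X carr] by (simp add: solution_in_def)
  ultimately obtain \<sigma> where \<sigma>: "solution_in C M (skolem_hull C M A) ?E ?Q \<sigma>"
    and fixes_hull: "\<And>Y v. v \<in> skolem_hull C M A Y \<Longrightarrow> \<sigma> Y v = v"
    by (rule skolem_hull_pure[where A = A]) auto
  have "\<sigma> X ?p \<in> skolem_hull C M A X" "padd M X (\<sigma> X m) (\<sigma> X m') = \<sigma> X ?p"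
    using \<sigma> by (simp_all add: solution_in_def)
  with fixes_hull[OF m] fixes_hull[OF m'] show ?thesis by metis
qed

lemma skolem_hull_act_closed:
  assumes A: "\<forall>X\<in>Ob C. A X \<subseteq> carr M X" and M: "presheaf C M"
    and X: "X \<in> Ob C" and Y: "Y \<in> Ob C" and f: "f \<in> Hom C X Y" and m: "m \<in> skolem_hull C M A Y"
  shows "act M f m \<in> skolem_hull C M A X"
proof -
  let ?E = "{(Y,m), (X,act M f m)}" and ?Q = "{EqAct f (Y,m) (X,act M f m)}"
  have carr: "m \<in> carr M Y" using skolem_hull_subset_carr[OF A Y] m by auto
  have "finite_system C ?E ?Q" using X Y by (simp add: finite_system_def)
  moreover have "solution_in C M (carr M) ?E ?Q (\<lambda>X m. m)"
    using carr f presheaf_act_closed[OF M X Y f carr] by (simp add: solution_in_def)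
  ultimately obtain \<sigma> where \<sigma>: "solution_in C M (skolem_hull C M A) ?E ?Q \<sigma>"
    and fixes_hull: "\<And>Y v. v \<in> skolem_hull C M A Y \<Longrightarrow> \<sigma> Y v = v"
    by (rule skolem_hull_pure[where A = A]) auto
  have "\<sigma> X (act M f m) \<in> skolem_hull C M A X" "act M f (\<sigma> Y m) = \<sigma> X (act M f m)"
    using \<sigma> by (simp_all add: solution_in_def)
  with fixes_hull[OF m] show ?thesis by metis
qed

lemma sub_presheaf_skolem_hull:
  assumes C: "klinear_category C" and M: "presheaf C M" and A: "sub_presheaf C M A"
  shows "sub_presheaf C M (skolem_hull C M A)"
proof -
  have A_carr: "\<forall>X\<in>Ob C. A X \<subseteq> carr M X" using A by (simp add: sub_presheaf_def)
  have pscale: "pscale M X a m \<in> skolem_hull C M A X"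
    if X: "X \<in> Ob C" and m: "m \<in> skolem_hull C M A X" for X a m
  proof -
    have "m \<in> carr M X" using skolem_hull_subset_carr[OF A_carr X] m by blast
    then have "pscale M X a m = act M (hscale C a (cid C X)) m" by (simp add: act_hscale_cid[OF C M X])
    then show ?thesis
      using skolem_hull_act_closed[OF A_carr M X X hscale_cid_in_Hom[OF C X] m] by simp
  qed
  have "pzero M X \<in> skolem_hull C M A X" if "X \<in> Ob C" for X
    using A that skolem_chain_subset_hull[of C M A 0 X] by (auto simp: sub_presheaf_def)
  then show ?thesis
    unfolding sub_presheaf_def
    using skolem_hull_subset_carr[OF A_carr] skolem_hull_padd_closed[OF M A_carr] pscale
      skolem_hull_act_closed[OF A_carr M]
    by blast
qed

section \<open>Retracting Day relations into the hull\<close>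

datatype ('o,'m,'v,'w,'k) day_rel_desc =
  AddMor 'o 'o 'm 'm 'v 'w
| ScaleMor 'o 'o 'm 'v 'w 'k
| AddLeft 'o 'o 'm 'v 'v 'w
| ScaleLeft 'o 'o 'm 'v 'w 'k
| AddRight 'o 'o 'm 'v 'w 'w
| ScaleRight 'o 'o 'm 'v 'w 'k
| Dinat 'o 'o 'o 'o 'm 'm 'm 'v 'w

fun day_rel :: "('o,'m,'k::field) smcat \<Rightarrow> ('o,'m,'v,'k) psh \<Rightarrow> ('o,'m,'w,'k) psh
    \<Rightarrow> ('o,'m,'v,'w,'k) day_rel_desc \<Rightarrow> ('o,'m,'v,'w) dgen \<Rightarrow> 'k" where
  "day_rel C M N (AddMor X Y f f' m n) =
     (\<lambda>h. delta (X,Y,hadd C f f',m,n) h - delta (X,Y,f,m,n) h - delta (X,Y,f',m,n) h)"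
| "day_rel C M N (ScaleMor X Y f m n a) =
     (\<lambda>h. delta (X,Y,hscale C a f,m,n) h - a * delta (X,Y,f,m,n) h)"
| "day_rel C M N (AddLeft X Y f m m' n) =
     (\<lambda>h. delta (X,Y,f,padd M X m m',n) h - delta (X,Y,f,m,n) h - delta (X,Y,f,m',n) h)"
| "day_rel C M N (ScaleLeft X Y f m n a) =
     (\<lambda>h. delta (X,Y,f,pscale M X a m,n) h - a * delta (X,Y,f,m,n) h)"
| "day_rel C M N (AddRight X Y f m n n') =
     (\<lambda>h. delta (X,Y,f,m,padd N Y n n') h - delta (X,Y,f,m,n) h - delta (X,Y,f,m,n') h)"
| "day_rel C M N (ScaleRight X Y f m n a) =
     (\<lambda>h. delta (X,Y,f,m,pscale N Y a n) h - a * delta (X,Y,f,m,n) h)"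
| "day_rel C M N (Dinat X Y X' Y' a b f m' n') =
     (\<lambda>h. delta (X',Y',comp C (tmor C a b) f,m',n') h - delta (X,Y,f,act M a m',act N b n') h)"

fun day_rel_valid :: "('o,'m,'k::field) smcat \<Rightarrow> ('o \<Rightarrow> 'v set) \<Rightarrow> ('o,'m,'w,'k) psh \<Rightarrow> 'o
    \<Rightarrow> ('o,'m,'v,'w,'k) day_rel_desc \<Rightarrow> bool" where
  "day_rel_valid C S N U (AddMor X Y f f' m n) \<longleftrightarrow>
     day_gen C S N U (X,Y,f,m,n) \<and> f' \<in> Hom C U (tob C X Y)"
| "day_rel_valid C S N U (ScaleMor X Y f m n a) \<longleftrightarrow> day_gen C S N U (X,Y,f,m,n)"
| "day_rel_valid C S N U (AddLeft X Y f m m' n) \<longleftrightarrow> day_gen C S N U (X,Y,f,m,n) \<and> m' \<in> S X"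
| "day_rel_valid C S N U (ScaleLeft X Y f m n a) \<longleftrightarrow> day_gen C S N U (X,Y,f,m,n)"
| "day_rel_valid C S N U (AddRight X Y f m n n') \<longleftrightarrow>
     day_gen C S N U (X,Y,f,m,n) \<and> n' \<in> carr N Y"
| "day_rel_valid C S N U (ScaleRight X Y f m n a) \<longleftrightarrow> day_gen C S N U (X,Y,f,m,n)"
| "day_rel_valid C S N U (Dinat X Y X' Y' a b f m' n') \<longleftrightarrow>
     X \<in> Ob C \<and> Y \<in> Ob C \<and> X' \<in> Ob C \<and> Y' \<in> Ob C \<and> a \<in> Hom C X X' \<and> b \<in> Hom C Y Y' \<and>
     f \<in> Hom C U (tob C X Y) \<and> m' \<in> S X' \<and> n' \<in> carr N Y'"

lemma day_rel_mem:
  "day_rel_valid C S N U d \<Longrightarrow> day_rel C M N d \<in> day_rels C M S N U"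
  unfolding day_rels_def Un_iff mem_Collect_eq
  by (cases d; simp only: day_rel.simps day_rel_valid.simps;
      (rule disjI1 disjI2)+, (rule exI)+, rule conjI, rule refl, simp)

lemma day_rels_desc:
  "r \<in> day_rels C M S N U \<Longrightarrow> \<exists>d. day_rel_valid C S N U d \<and> r = day_rel C M N d"
  unfolding day_rels_def Un_iff mem_Collect_eq
  by (elim disjE exE conjE; hypsubst; rule exI, rule conjI[rotated], rule day_rel.simps[symmetric], simp)

fun desc_elems :: "('o,'m,'v,'k) psh \<Rightarrow> ('o,'m,'v,'w,'k) day_rel_desc \<Rightarrow> ('o \<times> 'v) set" where
  "desc_elems M (AddLeft X Y f m m' n) = {(X,m), (X,m'), (X,padd M X m m')}"
| "desc_elems M (ScaleLeft X Y f m n a) = {(X,m), (X,pscale M X a m)}"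
| "desc_elems M (Dinat X Y X' Y' a b f m' n') = {(X',m'), (X,act M a m')}"
| "desc_elems M (AddMor X Y f f' m n) = {(X,m)}"
| "desc_elems M (ScaleMor X Y f m n a) = {(X,m)}"
| "desc_elems M (AddRight X Y f m n n') = {(X,m)}"
| "desc_elems M (ScaleRight X Y f m n a) = {(X,m)}"

text \<open>Scaling is recorded as the action of a \<cdot> id, so that equations have coefficients in Mor C
  rather than in k; this keeps the count of systems independent of #k.\<close>

fun desc_equations :: "('o,'m,'k::field) smcat \<Rightarrow> ('o,'m,'v,'k) psh \<Rightarrow> ('o,'m,'v,'w,'k) day_rel_desc
    \<Rightarrow> ('m, 'o \<times> 'v) equation set" where
  "desc_equations C M (AddLeft X Y f m m' n) = {EqAdd (X,m) (X,m') (X,padd M X m m')}"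
| "desc_equations C M (ScaleLeft X Y f m n a) =
     {EqAct (hscale C a (cid C X)) (X,m) (X,pscale M X a m)}"
| "desc_equations C M (Dinat X Y X' Y' a b f m' n') = {EqAct a (X',m') (X,act M a m')}"
| "desc_equations C M _ = {}"

fun desc_map :: "('o \<Rightarrow> 'v \<Rightarrow> 'v) \<Rightarrow> ('o,'m,'v,'w,'k) day_rel_desc \<Rightarrow> ('o,'m,'v,'w,'k) day_rel_desc" where
  "desc_map \<sigma> (AddMor X Y f f' m n) = AddMor X Y f f' (\<sigma> X m) n"
| "desc_map \<sigma> (ScaleMor X Y f m n a) = ScaleMor X Y f (\<sigma> X m) n a"
| "desc_map \<sigma> (AddLeft X Y f m m' n) = AddLeft X Y f (\<sigma> X m) (\<sigma> X m') n"
| "desc_map \<sigma> (ScaleLeft X Y f m n a) = ScaleLeft X Y f (\<sigma> X m) n a"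
| "desc_map \<sigma> (AddRight X Y f m n n') = AddRight X Y f (\<sigma> X m) n n'"
| "desc_map \<sigma> (ScaleRight X Y f m n a) = ScaleRight X Y f (\<sigma> X m) n a"
| "desc_map \<sigma> (Dinat X Y X' Y' a b f m' n') = Dinat X Y X' Y' a b f (\<sigma> X' m') n'"

definition gen_map :: "('o \<Rightarrow> 'v \<Rightarrow> 'v) \<Rightarrow> ('o,'m,'v,'w) dgen \<Rightarrow> ('o,'m,'v,'w) dgen" where
  "gen_map \<sigma> = (\<lambda>(X,Y,f,m,n). (X,Y,f,\<sigma> X m,n))"

lemma finite_support_day_rel: "finite_support (day_rel C M N d)"
  by (cases d) (simp_all add: finite_support_diff finite_support_scale finite_support_delta)

lemma finite_system_desc:
  "day_rel_valid C S N U d \<Longrightarrow> finite_system C (desc_elems M d) (desc_equations C M d)"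
  by (cases d) (simp_all add: finite_system_def day_gen_def)

lemma id_solution_in_desc:
  assumes C: "klinear_category C" and M: "presheaf C M" and d: "day_rel_valid C (carr M) N U d"
  shows "solution_in C M (carr M) (desc_elems M d) (desc_equations C M d) (\<lambda>X m. m)"
  using d
  by (cases d) (auto simp: solution_in_def day_gen_def hscale_cid_in_Hom[OF C]
        act_hscale_cid[OF C M] presheaf_padd_closed[OF M] presheaf_pscale_closed[OF M]
        intro: presheaf_act_closed[OF M])

lemma day_rel_valid_desc_map:
  assumes "day_rel_valid C (carr M) N U d" "solution_in C M S (desc_elems M d) (desc_equations C M d) \<sigma>"
  shows "day_rel_valid C S N U (desc_map \<sigma> d)"
  using assms by (cases d) (auto simp: solution_in_def day_gen_def)

lemma pushforward_day_rel:
  assumes C: "klinear_category C" and M: "presheaf C M" and S: "\<forall>X\<in>Ob C. S X \<subseteq> carr M X"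
    and d: "day_rel_valid C (carr M) N U d"
    and \<sigma>: "solution_in C M S (desc_elems M d) (desc_equations C M d) \<sigma>"
  shows "pushforward (gen_map \<sigma>) (day_rel C M N d) = day_rel C M N (desc_map \<sigma> d)"
proof (cases d)
  case (ScaleLeft X Y f m n a)
  then have X: "X \<in> Ob C" and "\<sigma> X m \<in> S X"
    and act: "act M (hscale C a (cid C X)) (\<sigma> X m) = \<sigma> X (pscale M X a m)"
    using d \<sigma> by (auto simp: solution_in_def day_gen_def)
  then have "\<sigma> X m \<in> carr M X" using S by blast
  then have "\<sigma> X (pscale M X a m) = pscale M X a (\<sigma> X m)"
    using act act_hscale_cid[OF C M X] by simp
  then show ?thesis
    using ScaleLeft by (simp add: gen_map_def pushforward_diff pushforward_scale pushforward_delta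
        finite_support_scale finite_support_delta)
qed (use \<sigma> in \<open>simp_all add: solution_in_def gen_map_def pushforward_diff pushforward_delta
      pushforward_scale finite_support_diff finite_support_scale finite_support_delta\<close>)

lemma day_span_retract:
  assumes C: "klinear_category C" and M: "presheaf C M" and S: "\<forall>X\<in>Ob C. S X \<subseteq> carr M X"
    and c: "c \<in> day_span C M (carr M) N U"
  shows "finite_support c \<and>
    (\<exists>E Q. finite_system C E Q \<and> solution_in C M (carr M) E Q (\<lambda>X m. m) \<and>
       (\<forall>\<sigma>. solution_in C M S E Q \<sigma> \<longrightarrow> pushforward (gen_map \<sigma>) c \<in> day_span C M S N U))"
  using c
proof (induction rule: day_span.induct)
  case zero
  have "finite_system C {} {}" "solution_in C M (carr M) {} {} (\<lambda>X m. m)"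
    by (simp_all add: finite_system_def solution_in_def)
  then show ?case
    by (auto simp: finite_support_def pushforward_zero intro: day_span.zero)
next
  case (rel r)
  then obtain d where d: "day_rel_valid C (carr M) N U d" and r: "r = day_rel C M N d"
    using day_rels_desc[OF rel] by blast
  show ?case
    unfolding r
    using finite_support_day_rel finite_system_desc[OF d] id_solution_in_desc[OF C M d]
      day_span.rel[OF day_rel_mem[OF day_rel_valid_desc_map[OF d]]] pushforward_day_rel[OF C M S d]
    by metis
next
  case (add x y)
  then obtain E Q E' Q' where
    "finite_system C E Q" "solution_in C M (carr M) E Q (\<lambda>X m. m)"
    "\<forall>\<sigma>. solution_in C M S E Q \<sigma> \<longrightarrow> pushforward (gen_map \<sigma>) x \<in> day_span C M S N U"
    "finite_system C E' Q'" "solution_in C M (carr M) E' Q' (\<lambda>X m. m)"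
    "\<forall>\<sigma>. solution_in C M S E' Q' \<sigma> \<longrightarrow> pushforward (gen_map \<sigma>) y \<in> day_span C M S N U"
    by blast
  with add show ?case
    by (intro conjI exI[of _ "E \<union> E'"] exI[of _ "Q \<union> Q'"])
      (auto simp: finite_support_add pushforward_add solution_in_Un finite_system_Un intro: day_span.add)
next
  case (scale x a)
  then obtain E Q where "finite_system C E Q" "solution_in C M (carr M) E Q (\<lambda>X m. m)"
    "\<forall>\<sigma>. solution_in C M S E Q \<sigma> \<longrightarrow> pushforward (gen_map \<sigma>) x \<in> day_span C M S N U"
    by blast
  with scale show ?case
    by (intro conjI exI[of _ E] exI[of _ Q])
      (auto simp: finite_support_scale pushforward_scale intro: day_span.scale)
qed

lemma day_incl_mono_skolem_hull:
  assumes C: "klinear_category C" and M: "presheaf C M" and A: "sub_presheaf C M A"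
  shows "day_incl_mono C M (skolem_hull C M A) N"
  unfolding day_incl_mono_def
proof (intro ballI impI)
  fix U c
  assume c_gens: "c \<in> day_free C (skolem_hull C M A) N U" and c: "c \<in> day_span C M (carr M) N U"
  have "\<forall>X\<in>Ob C. A X \<subseteq> carr M X" using A by (simp add: sub_presheaf_def)
  then have "\<forall>X\<in>Ob C. skolem_hull C M A X \<subseteq> carr M X" by (simp add: skolem_hull_subset_carr)
  then obtain E Q where sys: "finite_system C E Q" and id: "solution_in C M (carr M) E Q (\<lambda>X m. m)"
    and retract: "\<And>\<sigma>. solution_in C M (skolem_hull C M A) E Q \<sigma> \<Longrightarrow>
      pushforward (gen_map \<sigma>) c \<in> day_span C M (skolem_hull C M A) N U"
    using day_span_retract[OF C M _ c] by blast
  obtain \<sigma> where \<sigma>: "solution_in C M (skolem_hull C M A) E Q \<sigma>"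
    and fixes_hull: "\<And>X m. m \<in> skolem_hull C M A X \<Longrightarrow> \<sigma> X m = m"
    by (rule skolem_hull_pure[OF sys id, where A = A]) auto
  have "pushforward (gen_map \<sigma>) c = c"
  proof (rule pushforward_id_on_support)
    fix g assume "c g \<noteq> 0"
    then have "day_gen C (skolem_hull C M A) N U g" using c_gens unfolding day_free_def by blast
    then show "gen_map \<sigma> g = g" using fixes_hull by (auto simp: gen_map_def day_gen_def)
  qed
  then show "c \<in> day_span C M (skolem_hull C M A) N U" using retract[OF \<sigma>] by simp
qed

section \<open>Cardinality of the hull\<close>

lemma psh_size_skolem_step_subset:
  "psh_size C (skolem_step C M A) \<subseteq> psh_size C A \<union>
     (\<lambda>(objs, params, eqs, i). (objs ! i, solution C M objs params eqs ! i)) `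
       (lists (Ob C) \<times> lists (insert None (Some ` (\<Union>Y\<in>Ob C. A Y))) \<times>
        lists {e. set1_equation e \<subseteq> Mor C} \<times> UNIV)"
  (is "_ \<subseteq> _ \<union> ?f ` ?P")
proof
  fix p assume "p \<in> psh_size C (skolem_step C M A)"
  then obtain X v where p: "p = (X, v)" "X \<in> Ob C" "v \<in> skolem_step C M A X"
    by (auto simp: psh_size_def)
  from p(3) consider "v \<in> A X"
    | objs params eqs i where "(objs, params, eqs, i) \<in> ?P" "objs ! i = X"
        "v = solution C M objs params eqs ! i"
    unfolding skolem_step_def by blast
  then show "p \<in> psh_size C A \<union> ?f ` ?P"
  proof cases
    case 1
    then show ?thesis using p by (simp add: psh_size_def)
  next
    case (2 objs params eqs i)
    then have "p = ?f (objs, params, eqs, i)" using p by simp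
    then show ?thesis using 2 by blast
  qed
qed

lemma equations_over_subset:
  "{e :: ('m, nat) equation. set1_equation e \<subseteq> F} \<subseteq>
     (\<lambda>(i, j, l). EqAdd i j l) ` UNIV \<union> (\<lambda>(f, i, j). EqAct f i j) ` (F \<times> UNIV)"
proof
  fix e :: "('m, nat) equation" assume "e \<in> {e. set1_equation e \<subseteq> F}"
  then show "e \<in> (\<lambda>(i, j, l). EqAdd i j l) ` UNIV \<union> (\<lambda>(f, i, j). EqAct f i j) ` (F \<times> UNIV)"
  proof (cases e)
    case (EqAdd i j l)
    then show ?thesis by (auto intro: image_eqI[of _ _ "(i, j, l)"])
  next
    case (EqAct f i j)
    then show ?thesis using \<open>e \<in> {e. set1_equation e \<subseteq> F}\<close> by (auto intro: image_eqI[of _ _ "(f, i, j)"])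
  qed
qed

lemma card_of_Ob_le_Mor:
  includes cardinal_syntax
  assumes "klinear_category C"
  shows "|Ob C| \<le>o |Mor C|"
proof -
  have "inj_on (cid C) (Ob C)"
    by (rule inj_on_inverseI[of _ "dom C"]) (use cid_in_Hom[OF assms] in \<open>simp add: Hom_def\<close>)
  moreover have "cid C ` Ob C \<subseteq> Mor C"
    using cid_in_Hom[OF assms] by (auto simp: Hom_def)
  ultimately show ?thesis using card_of_ordLeq by blast
qed

context
  includes cardinal_syntax
  fixes K :: "'x set"
  assumes infinite_K: "infinite K"
begin

lemma card_of_Un_le_infinite: "|A| \<le>o |K| \<Longrightarrow> |B| \<le>o |K| \<Longrightarrow> |A \<union> B| \<le>o |K|"
  using card_of_Un_ordLeq_infinite_Field[of "|K|" A B] infinite_K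
  by (simp add: Field_card_of card_of_Card_order card_of_card_order_on)

lemma card_of_Times_le_infinite: "|A| \<le>o |K| \<Longrightarrow> |B| \<le>o |K| \<Longrightarrow> |A \<times> B| \<le>o |K|"
  using card_of_Times_ordLeq_infinite_Field[of "|K|" A B] infinite_K
  by (simp add: Field_card_of card_of_Card_order card_of_card_order_on)

lemma card_of_image_le_infinite: "|A| \<le>o |K| \<Longrightarrow> |f ` A| \<le>o |K|"
  by (rule ordLeq_transitive[OF card_of_image])

lemma card_of_nat_le_infinite: "|UNIV :: nat set| \<le>o |K|"
  using infinite_K by (simp add: infinite_iff_card_of_nat)

lemma card_of_finite_le_infinite: "finite A \<Longrightarrow> |A| \<le>o |K|"
  using ordLeq_total[OF card_of_Well_order card_of_Well_order, of A K] card_of_ordLeq_finite infinite_K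
  by blast

lemma card_of_lists_le_infinite:
  assumes "|A| \<le>o |K|"
  shows "|lists A| \<le>o |K|"
proof -
  define L where "L n = {xs \<in> lists A. length xs = n}" for n
  have "|L n| \<le>o |K|" for n
  proof (induction n)
    case 0
    have "L 0 = {[]}" by (auto simp: L_def)
    then show ?case by (simp add: card_of_finite_le_infinite)
  next
    case (Suc n)
    have "L (Suc n) \<subseteq> (\<lambda>(x, xs). x # xs) ` (A \<times> L n)"
      by (auto simp: L_def length_Suc_conv)
    moreover have "|(\<lambda>(x, xs). x # xs) ` (A \<times> L n)| \<le>o |K|"
      by (intro card_of_image_le_infinite card_of_Times_le_infinite assms Suc)
    ultimately show ?case by (rule ordLeq_transitive[OF card_of_mono1])
  qed
  moreover have "lists A = (\<Union>n. L n)" by (auto simp: L_def)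
  ultimately show ?thesis
    using card_of_UNION_ordLeq_infinite[OF infinite_K card_of_nat_le_infinite, of L] by simp
qed

lemma card_of_equations_le_infinite:
  "|F| \<le>o |K| \<Longrightarrow> |{e :: ('m, nat) equation. set1_equation e \<subseteq> F}| \<le>o |K|"
  by (rule ordLeq_transitive[OF card_of_mono1[OF equations_over_subset]])
    (simp add: card_of_Un_le_infinite card_of_image_le_infinite card_of_Times_le_infinite
      card_of_nat_le_infinite flip: UNIV_Times_UNIV)

lemma card_of_skolem_chain_le:
  assumes C: "klinear_category C" and A: "|psh_size C A| \<le>o |K|" and Mor: "|Mor C| \<le>o |K|"
  shows "|psh_size C (skolem_chain C M A n)| \<le>o |K|"
proof (induction n)
  case 0
  then show ?case using A by simp
next
  case (Suc n)
  let ?A = "skolem_chain C M A n"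
  have Ob: "|Ob C| \<le>o |K|" using ordLeq_transitive[OF card_of_Ob_le_Mor[OF C] Mor] .
  have "(\<Union>Y\<in>Ob C. ?A Y) = snd ` psh_size C ?A" by (force simp: psh_size_def)
  then have "|\<Union>Y\<in>Ob C. ?A Y| \<le>o |K|" using card_of_image_le_infinite[OF Suc] by simp
  then have params: "|insert None (Some ` (\<Union>Y\<in>Ob C. ?A Y))| \<le>o |K|"
    using card_of_Un_le_infinite[OF card_of_finite_le_infinite card_of_image_le_infinite, of "{None}"]
    by simp
  show ?case
    unfolding skolem_chain.simps
    by (rule ordLeq_transitive[OF card_of_mono1[OF psh_size_skolem_step_subset[of C M ?A]]])
      (simp add: Suc card_of_Un_le_infinite card_of_image_le_infinite card_of_Times_le_infinite
        card_of_lists_le_infinite Ob params card_of_equations_le_infinite Mor card_of_nat_le_infinite)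
qed

lemma card_of_skolem_hull_le:
  assumes "klinear_category C" "|psh_size C A| \<le>o |K|" "|Mor C| \<le>o |K|"
  shows "|psh_size C (skolem_hull C M A)| \<le>o |K|"
proof -
  have "psh_size C (skolem_hull C M A) = (\<Union>n. psh_size C (skolem_chain C M A n))"
    by (auto simp: psh_size_def skolem_hull_def)
  then show ?thesis
    by (simp add: card_of_UNION_ordLeq_infinite[OF infinite_K card_of_nat_le_infinite]
        card_of_skolem_chain_le[OF assms])
qed

end

lemma card_of_le_max_of_infinite_bounds:
  includes cardinal_syntax
  fixes A :: "'a set" and B :: "'b set" and P :: "'c set"
  assumes bound_A: "\<And>K :: 'a set. infinite K \<Longrightarrow> |A| \<le>o |K| \<Longrightarrow> |B| \<le>o |K| \<Longrightarrow> |P| \<le>o |K|"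
    and bound_B: "\<And>K :: 'b set. infinite K \<Longrightarrow> |A| \<le>o |K| \<Longrightarrow> |B| \<le>o |K| \<Longrightarrow> |P| \<le>o |K|"
    and bound_nat: "|A| \<le>o |UNIV :: nat set| \<Longrightarrow> |B| \<le>o |UNIV :: nat set| \<Longrightarrow>
      |P| \<le>o |UNIV :: nat set|"
  shows "|P| \<le>o |A| \<or> |P| \<le>o |B| \<or> |P| \<le>o |UNIV :: nat set|"
proof -
  have refl: "|X| \<le>o |X|" for X :: "'x set"
    by (rule ordLeq_reflexive[OF card_of_Well_order])
  have finite_le_nat: "finite X \<Longrightarrow> |X| \<le>o |UNIV :: nat set|" for X :: "'x set"
    by (rule card_of_finite_le_infinite[OF infinite_UNIV_nat])
  consider "|B| \<le>o |A|" | "|A| \<le>o |B|"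
    using ordLeq_total[OF card_of_Well_order card_of_Well_order] by blast
  then show ?thesis
  proof cases
    case 1
    then show ?thesis
      using bound_A[OF _ refl 1] bound_nat finite_le_nat[of A] ordLeq_transitive[OF 1] by blast
  next
    case 2
    then show ?thesis
      using bound_B[OF _ 2 refl] bound_nat finite_le_nat[of B] ordLeq_transitive[OF 2] by blast
  qed
qed

theorem proposition2p28:
  fixes C :: "('o,'m,'k::field) smcat"
    and M :: "('o,'m,'v,'k) psh"
    and N :: "('o,'m,'w,'k) psh"
    and M0 :: "'o \<Rightarrow> 'v set"
  assumes "klinear_symmetric_monoidal C"
    and "presheaf C M" and "presheaf C N"
    and "sub_presheaf C M M0"
  shows "\<exists>M'. sub_presheaf C M M' \<and> (\<forall>X\<in>Ob C. M0 X \<subseteq> M' X) \<and>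
           day_incl_mono C M M' N \<and>
           ((card_of (psh_size C M'), card_of (psh_size C M0)) \<in> ordLeq \<or>
            (card_of (psh_size C M'), card_of (Mor C)) \<in> ordLeq \<or>
            (card_of (psh_size C M'), card_of (UNIV :: nat set)) \<in> ordLeq)"
proof (intro exI conjI)
  have C: "klinear_category C"
    using assms(1) by (simp add: klinear_symmetric_monoidal_def Let_def)
  show "sub_presheaf C M (skolem_hull C M M0)"
    by (rule sub_presheaf_skolem_hull[OF C assms(2,4)])
  show "\<forall>X\<in>Ob C. M0 X \<subseteq> skolem_hull C M M0 X"
    using skolem_chain_subset_hull[of C M M0 0] by simp
  show "day_incl_mono C M (skolem_hull C M M0) N"
    by (rule day_incl_mono_skolem_hull[OF C assms(2,4)])
  show "(card_of (psh_size C (skolem_hull C M M0)), card_of (psh_size C M0)) \<in> ordLeq \<or>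
        (card_of (psh_size C (skolem_hull C M M0)), card_of (Mor C)) \<in> ordLeq \<or>
        (card_of (psh_size C (skolem_hull C M M0)), card_of (UNIV :: nat set)) \<in> ordLeq"
    by (rule card_of_le_max_of_infinite_bounds; rule card_of_skolem_hull_le[OF _ C]; simp)
qed

end
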